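(* If an $n$-Brinkhuis $(k_0,k_1,k_2)$-triple exists, then $s\ge k^{1/(n-1)}$, where $k=\min(k_0,k_1,k_2)$.
   Context: Let $\Sigma=\{0,1,2\}$. A word over $\Sigma$ is square-free if it cannot be written as $xyyz$ with $y$ nonempty. $\mathcal{A}(n)$ is the set of square-free words of length $n$, $a(n)=|\mathcal{A}(n)|$, and $s=\lim_{n\to\infty}a(n)^{1/n}$ (this limit exists). An $n$-Brinkhuis $(k_0,k_1,k_2)$-triple, where $k_0,k_1,k_2\ge1$, consists of three sets $\mathcal{B}^{(i)}=\{w^{(i)}_j: 1\le j\le k_i\}\subset\mathcal{A}(n)$ for $i\in\{0,1,2\}$. Each $\mathcal{B}^{(i)}$ has $k_i$ distinct square-free words of length $n$. The defining condition: for every square-free word $ii'i''\in\mathcal{A}(3)$ and all $1\le j\le k_i$, $1\le j'\le k_{i'}$, $1\le j''\le k_{i''}$, the concatenation $w^{(i)}_jw^{(i')}_{j'}w^{(i'')}_{j''}$ is square-free. *)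

theory Defs
  imports Complex_Main
begin

definition square_free :: "nat list \<Rightarrow> bool" where
  "square_free w \<longleftrightarrow> \<not> (\<exists>x y z. y \<noteq> [] \<and> w = x @ y @ y @ z)"

definition sqfree_words :: "nat \<Rightarrow> nat list set" where
  "sqfree_words n = {w. length w = n \<and> set w \<subseteq> {0,1,2} \<and> square_free w}"

definition a_count :: "nat \<Rightarrow> nat" where
  "a_count n = card (sqfree_words n)"

definition growth_s :: real where
  "growth_s = lim (\<lambda>n. real (a_count n) powr (1 / real n))"

definition brinkhuis_triple :: "nat \<Rightarrow> (nat \<Rightarrow> nat) \<Rightarrow> (nat \<Rightarrow> nat list set) \<Rightarrow> bool" where
  "brinkhuis_triple n k B \<longleftrightarrow>
     (\<forall>i<3. 1 \<le> k i \<and> B i \<subseteq> sqfree_words n \<and> card (B i) = k i) \<and>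
     (\<forall>i i' i''. [i, i', i''] \<in> sqfree_words 3 \<longrightarrow>
        (\<forall>u\<in>B i. \<forall>v\<in>B i'. \<forall>w\<in>B i''. square_free (u @ v @ w)))"

end

theory Submission
  imports Defs "HOL-Library.Sublist"
begin

(* Let k be the least of k0, k1, k2. Replacing every letter i of a square-free ternary word of
   length m by one of k chosen words of B^(i) gives a square-free word of length m n: a B-word
   occurring in such an image is aligned with the block boundaries (otherwise it would create a
   square together with a neighbouring block), so a square in the image either lies within three
   consecutive blocks, contradicting the triple condition, or has a length divisible by n and
   pulls back to a square of the original word. Distinct choices give distinct images, hence
   a(m) k^m <= a(m n). As a is submultiplicative, Fekete's lemma yields a(N)^(1/N) --> s, and
   m --> infinity gives s k <= s^n, that is s >= k^(1/(n-1)). For n <= 1 the bound is 1, and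
   s >= 1 because Leech's 13-uniform square-free morphism provides square-free words of every
   length. *)

section \<open>Squares in words\<close>

lemma square_free_Nil: "square_free []"
  by (simp add: square_free_def)

lemma square_free_infix:
  assumes "square_free (x @ y @ z)"
  shows "square_free y"
  using assms unfolding square_free_def by (metis append.assoc)

lemma square_free_take: "square_free w \<Longrightarrow> square_free (take i w)"
  using square_free_infix[of "[]" "take i w" "drop i w"] by simp

lemma square_free_drop: "square_free w \<Longrightarrow> square_free (drop i w)"
  using square_free_infix[of "take i w" "drop i w" "[]"] by simp

definition square_at :: "'a list \<Rightarrow> nat \<Rightarrow> nat \<Rightarrow> bool" where
  "square_at w p l \<longleftrightarrow> 0 < l \<and> p + 2 * l \<le> length w \<and> take l (drop p w) = take l (drop (p + l) w)"

lemma square_free_iff_no_square_at: "square_free w \<longleftrightarrow> (\<forall>p l. \<not> square_at w p l)"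
proof
  assume "square_free w"
  show "\<forall>p l. \<not> square_at w p l"
  proof (intro allI notI)
    fix p l assume sq: "square_at w p l"
    then have "w = take p w @ take l (drop p w) @ take l (drop p w) @ drop (p + 2 * l) w"
      unfolding square_at_def
      by (metis append_take_drop_id drop_drop add.commute mult_2)
    moreover have "take l (drop p w) \<noteq> []" using sq by (auto simp: square_at_def)
    ultimately show False using \<open>square_free w\<close> unfolding square_free_def by blast
  qed
next
  assume no_square: "\<forall>p l. \<not> square_at w p l"
  show "square_free w"
    unfolding square_free_def
  proof clarify
    fix x y z assume "y \<noteq> []" "w = x @ y @ y @ z"
    then have "square_at w (length x) (length y)"
      by (simp add: square_at_def)
    with no_square show False by blast
  qed
qed

lemma square_at_iff_nth:
  "square_at w p l \<longleftrightarrow> 0 < l \<and> p + 2 * l \<le> length w \<and> (\<forall>i<l. w ! (p + i) = w ! (p + l + i))"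
  unfolding square_at_def by (auto simp: list_eq_iff_nth_eq add.assoc)

lemma square_at_shift:
  assumes "square_at w p l" "p \<le> q" "q + d \<le> p + l"
  shows "take d (drop q w) = take d (drop (q + l) w)"
proof -
  have "take d (drop q w) = take d (drop (q - p) (take l (drop p w)))"
    using assms(2,3) by (simp add: drop_take)
  also have "\<dots> = take d (drop (q - p) (take l (drop (p + l) w)))"
    using assms(1) by (simp add: square_at_def)
  also have "\<dots> = take d (drop (q + l) w)"
    using assms(2,3) by (simp add: drop_take algebra_simps)
  finally show ?thesis .
qed

lemma square_at_infix:
  assumes "square_at w p l" "q \<le> p" "p + 2 * l \<le> q + m"
  shows "square_at (take m (drop q w)) (p - q) l"
  using assms by (auto simp: square_at_def drop_take min_def)

lemma square_free_nth_Suc: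
  assumes "square_free w" "Suc i < length w"
  shows "w ! i \<noteq> w ! Suc i"
  using assms square_at_iff_nth[of w i 1] by (auto simp: square_free_iff_no_square_at)

lemma square_free_length3:
  assumes "a \<noteq> b" "b \<noteq> c"
  shows "square_free [a, b, c]"
  using assms by (auto simp: square_free_def append_eq_Cons_conv Cons_eq_append_conv)

lemma not_square_free_straddle:
  assumes "u = drop r x @ take r y" "0 < r" "r < length x" "length y = length x"
  shows "\<not> square_free (x @ u)" and "\<not> square_free (u @ y)"
proof -
  have "x @ u = take r x @ drop r x @ drop r x @ take r y"
    using assms(1) by simp
  moreover have "drop r x \<noteq> []"
    using assms(3) by simp
  ultimately show "\<not> square_free (x @ u)"
    unfolding square_free_def by blast
  have "u @ y = drop r x @ take r y @ take r y @ drop r y"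
    using assms(1) by simp
  moreover have "take r y \<noteq> []"
    using assms(2-4) by (cases y) auto
  ultimately show "\<not> square_free (u @ y)"
    unfolding square_free_def by blast
qed

lemma shifted_blocks_not_square_free:
  assumes "drop r x = drop r y" "take r y = take r z" "length x = length y" "r \<le> length y" "y \<noteq> []"
  shows "\<not> square_free (x @ y @ z)"
proof -
  let ?s = "drop r x @ take r y"
  have "x @ y @ z = take r x @ ?s @ ?s @ drop r z"
    using assms(1,2) by (metis append_take_drop_id append.assoc)
  moreover have "?s \<noteq> []"
    using assms(3-5) by auto
  ultimately show ?thesis
    unfolding square_free_def by blast
qed

lemma finite_sqfree_words: "finite (sqfree_words N)"
  by (rule finite_subset[OF _ finite_lists_length_eq[of "{0, 1, 2 :: nat}" N]])
    (auto simp: sqfree_words_def)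

lemma sqfree_words_0: "sqfree_words 0 = {[]}"
  by (auto simp: sqfree_words_def square_free_Nil)

lemma a_count_add_le: "a_count (p + q) \<le> a_count p * a_count q"
proof -
  have "a_count (p + q) \<le> card (sqfree_words p \<times> sqfree_words q)"
    unfolding a_count_def
  proof (rule card_inj_on_le[where f = "\<lambda>w. (take p w, drop p w)"])
    show "inj_on (\<lambda>w. (take p w, drop p w)) (sqfree_words (p + q))"
      by (rule inj_onI) (metis append_take_drop_id prod.inject)
    show "(\<lambda>w. (take p w, drop p w)) ` sqfree_words (p + q) \<subseteq> sqfree_words p \<times> sqfree_words q"
      by (auto simp: sqfree_words_def square_free_take square_free_drop dest: in_set_takeD in_set_dropD)
  qed (simp add: finite_sqfree_words)
  then show ?thesis
    by (simp add: card_cartesian_product a_count_def)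
qed

lemma brinkhuis_triple_k_bounds:
  assumes "brinkhuis_triple n k B" "i < 3"
  shows "1 \<le> k i" "k i \<le> a_count n"
proof -
  have "1 \<le> k i" and sub: "B i \<subseteq> sqfree_words n" and card: "card (B i) = k i"
    using assms by (auto simp: brinkhuis_triple_def)
  then show "1 \<le> k i" "k i \<le> a_count n"
    using card_mono[OF finite_sqfree_words sub] by (simp_all add: a_count_def)
qed

lemma length_concat_uniform:
  "(\<And>u. u \<in> set us \<Longrightarrow> length u = n) \<Longrightarrow> length (concat us) = length us * n"
  by (induction us) auto

lemma drop_concat_uniform:
  "(\<And>u. u \<in> set us \<Longrightarrow> length u = n) \<Longrightarrow> drop (i * n) (concat us) = concat (drop i us)"
proof (induction us arbitrary: i)
  case (Cons u us)
  then show ?case by (cases i) (auto simp: add.commute)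
qed simp

lemma take_concat_uniform:
  "(\<And>u. u \<in> set us \<Longrightarrow> length u = n) \<Longrightarrow> take (i * n) (concat us) = concat (take i us)"
proof (induction us arbitrary: i)
  case (Cons u us)
  then show ?case by (cases i) (auto simp: add.commute)
qed simp

lemma take_drop_concat_uniform:
  assumes "\<And>u. u \<in> set us \<Longrightarrow> length u = n" "i < length us"
  shows "take n (drop (i * n) (concat us)) = us ! i"
  using assms by (simp add: drop_concat_uniform Cons_nth_drop_Suc[symmetric])

lemma take_drop_concat_uniform_straddle:
  assumes "\<And>u. u \<in> set us \<Longrightarrow> length u = n" "Suc i < length us" "r \<le> n"
  shows "take n (drop (i * n + r) (concat us)) = drop r (us ! i) @ take r (us ! Suc i)"
proof -
  have "drop (i * n + r) (concat us) = drop r (concat (drop i us))"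
    using assms(1) by (simp add: drop_concat_uniform add.commute flip: drop_drop)
  also have "\<dots> = drop r (us ! i @ us ! Suc i @ concat (drop (Suc (Suc i)) us))"
    using assms(2) by (simp add: Cons_nth_drop_Suc[symmetric])
  finally show ?thesis
    using assms by simp
qed

lemma concat_map_zip_inject:
  assumes "inj_on G (A \<times> C)" "\<And>x. x \<in> A \<times> C \<Longrightarrow> length (G x) = l"
    and "length js = length w" "length js' = length w'" "length w' = length w"
    and "set w \<union> set w' \<subseteq> A" "set js \<union> set js' \<subseteq> C"
    and "concat (map G (zip w js)) = concat (map G (zip w' js'))"
  shows "w = w' \<and> js = js'"
proof -
  have "set (zip xs ys) \<subseteq> set xs \<times> set ys" for xs :: "'a list" and ys :: "'b list"
    by (auto elim: in_set_zipE)
  then have zips: "set (zip w js) \<union> set (zip w' js') \<subseteq> A \<times> C"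
    using assms(6,7) by blast
  have len: "length u = l" if "u \<in> set (map G (zip w js)) \<union> set (map G (zip w' js'))" for u
  proof -
    from that obtain x where "x \<in> set (zip w js) \<union> set (zip w' js')" "u = G x"
      by auto
    then show ?thesis
      using zips assms(2) by blast
  qed
  have "length u = length u'" if "(u, u') \<in> set (zip (map G (zip w js)) (map G (zip w' js')))" for u u'
    using len set_zip_leftD[OF that] set_zip_rightD[OF that] by simp
  then have "map G (zip w js) = map G (zip w' js')"
    using assms(3-5,8) concat_eq_concat_iff[of "map G (zip w js)" "map G (zip w' js')"] by auto
  then have "zip w js = zip w' js'"
    using inj_on_map_eq_map[OF inj_on_subset[OF assms(1) zips]] by blast
  then show ?thesis
    using zip_eq_conv[of w js "zip w' js'"] assms(3-5) by simp
qed

section \<open>Brinkhuis triples\<close>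

locale brinkhuis =
  fixes n :: nat and k :: "nat \<Rightarrow> nat" and B :: "nat \<Rightarrow> nat list set"
  assumes triple: "brinkhuis_triple n k B"
    and n_pos: "0 < n"
begin

abbreviation kmin :: nat where
  "kmin \<equiv> min (k 0) (min (k 1) (k 2))"

lemma mult_n_le_iff: "a * n \<le> b * n \<longleftrightarrow> a \<le> b"
  using n_pos by simp

lemma mult_n_less_iff: "a * n < b * n \<longleftrightarrow> a < b"
  using n_pos by simp

lemma B_subset: "a < 3 \<Longrightarrow> B a \<subseteq> sqfree_words n"
  using triple by (simp add: brinkhuis_triple_def)

lemma card_B: "a < 3 \<Longrightarrow> card (B a) = k a"
  using triple by (simp add: brinkhuis_triple_def)

lemma length_B: "a < 3 \<Longrightarrow> u \<in> B a \<Longrightarrow> length u = n"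
  using B_subset by (auto simp: sqfree_words_def)

lemma letters_B: "a < 3 \<Longrightarrow> u \<in> B a \<Longrightarrow> set u \<subseteq> {0, 1, 2}"
  using B_subset by (auto simp: sqfree_words_def)

lemma square_free_B: "a < 3 \<Longrightarrow> u \<in> B a \<Longrightarrow> square_free u"
  using B_subset by (auto simp: sqfree_words_def)

lemma B_nonempty: "a < 3 \<Longrightarrow> B a \<noteq> {}"
  using triple card_B by (fastforce simp: brinkhuis_triple_def)

lemma square_free_B_triple:
  assumes "a < 3" "b < 3" "c < 3" "a \<noteq> b" "b \<noteq> c" "u \<in> B a" "v \<in> B b" "x \<in> B c"
  shows "square_free (u @ v @ x)"
proof -
  have "[a, b, c] \<in> sqfree_words 3"
    using assms(1-5) square_free_length3 by (auto simp: sqfree_words_def)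
  then show ?thesis
    using triple assms(6-8) by (simp add: brinkhuis_triple_def)
qed

lemma square_free_B_pair:
  assumes "a < 3" "b < 3" "a \<noteq> b" "u \<in> B a" "v \<in> B b"
  shows "square_free (u @ v)"
proof -
  define c :: nat where "c = (if b = 0 then 1 else 0)"
  have c: "c < 3" "b \<noteq> c" by (auto simp: c_def)
  obtain x where "x \<in> B c" using B_nonempty[OF c(1)] by blast
  then have "square_free ((u @ v) @ x)"
    using square_free_B_triple[OF assms(1,2) c(1) assms(3) c(2) assms(4,5)] by simp
  then show ?thesis
    using square_free_infix[of "[]"] by simp
qed

lemma B_disjoint:
  assumes "a < 3" "b < 3" "u \<in> B a" "u \<in> B b"
  shows "a = b"
proof (rule ccontr)
  assume "a \<noteq> b"
  then have "square_free ([] @ u @ u @ [])"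
    using square_free_B_pair assms by simp
  moreover have "u \<noteq> []"
    using length_B[OF assms(1,3)] n_pos by auto
  ultimately show False
    unfolding square_free_def by blast
qed

abbreviation blocks_of :: "nat list \<Rightarrow> nat list list \<Rightarrow> bool" where
  "blocks_of w us \<equiv> list_all2 (\<lambda>a u. a < 3 \<and> u \<in> B a) w us"

lemma blocks_of_nth:
  "blocks_of w us \<Longrightarrow> i < length w \<Longrightarrow> w ! i < 3 \<and> us ! i \<in> B (w ! i)"
  using list_all2_nthD by fastforce

lemma length_mem_blocks_of: "blocks_of w us \<Longrightarrow> u \<in> set us \<Longrightarrow> length u = n"
  by (auto simp: list_all2_conv_all_nth in_set_conv_nth length_B)

lemma letters_concat_blocks: "blocks_of w us \<Longrightarrow> set (concat us) \<subseteq> {0, 1, 2}"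
proof (induction rule: list_all2_induct)
  case (Cons a w u us)
  then show ?case using letters_B[of a u] by simp
qed simp

lemma square_free_concat_short:
  assumes "square_free w" "blocks_of w us" "length w \<le> 3"
  shows "square_free (concat us)"
proof -
  have len: "length us = length w"
    using assms(2) list_all2_lengthD by fastforce
  note nth = blocks_of_nth[OF assms(2)]
  note adjacent = square_free_nth_Suc[OF assms(1)]
  consider "us = []" | u where "us = [u]" | u v where "us = [u, v]" | u v x where "us = [u, v, x]"
    using assms(3) len by (auto simp: numeral_3_eq_3 le_Suc_eq length_Suc_conv)
  then show ?thesis
  proof cases
    case 1
    then show ?thesis by (simp add: square_free_Nil)
  next
    case (2 u)
    with len have "w \<noteq> []" by auto
    then show ?thesis using 2 nth[of 0] square_free_B by auto
  next
    case (3 u v)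
    with len have "length w = 2" by simp
    then have "square_free (u @ v)"
      using 3 nth[of 0] nth[of 1] adjacent[of 0] by (intro square_free_B_pair[of "w ! 0" "w ! 1"]) auto
    then show ?thesis
      using 3 by simp
  next
    case (4 u v x)
    with len have "length w = 3" by simp
    then have "square_free (u @ v @ x)"
      using 4 nth[of 0] nth[of 1] nth[of 2] adjacent[of 0] adjacent[of 1]
      by (intro square_free_B_triple[of "w ! 0" "w ! 1" "w ! 2"]) (auto simp: numeral_2_eq_2)
    then show ?thesis
      using 4 by simp
  qed
qed

lemma block_within_long_square:
  assumes "(p div n + 3) * n < p + 2 * l"
  obtains i where "p \<le> i * n" "i * n + n \<le> p + l"
    | i where "p + l \<le> i * n" "i * n + n \<le> p + 2 * l"
proof -
  define j r where "j = p div n" and "r = p mod n"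
  have p: "p = j * n + r" and "r < n"
    using n_pos by (auto simp: j_def r_def)
  have long: "j * n + 3 * n < p + 2 * l"
    using assms by (simp add: j_def algebra_simps)
  consider "r = 0" | "0 < r" "(j + 2) * n \<le> p + l" | "p + l < (j + 2) * n"
    by fastforce
  then show ?thesis
  proof cases
    case 1
    then show ?thesis
      using that(1)[of j] long p by simp
  next
    case 2
    then show ?thesis
      using that(1)[of "Suc j"] p \<open>r < n\<close> by (simp add: algebra_simps)
  next
    case 3
    then show ?thesis
      using that(2)[of "j + 2"] long p \<open>r < n\<close> by (simp add: algebra_simps)
  qed
qed

context
  fixes w :: "nat list" and us :: "nat list list"
  assumes w_blocks: "blocks_of w us"
begin

lemma length_blocks_eq: "length us = length w"
  using w_blocks list_all2_lengthD by fastforce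

lemmas length_block = length_mem_blocks_of[OF w_blocks]

lemma length_concat_blocks: "length (concat us) = length w * n"
  using length_concat_uniform[OF length_block] length_blocks_eq by simp

lemma take_drop_concat_blocks: "i < length w \<Longrightarrow> take n (drop (i * n) (concat us)) = us ! i"
  using take_drop_concat_uniform[OF length_block] length_blocks_eq by simp

lemma block_occurrence_aligned:
  assumes "square_free w" "c < 3" "u \<in> B c"
    and "q + n \<le> length (concat us)" "take n (drop q (concat us)) = u"
  shows "n dvd q"
proof (rule ccontr)
  assume "\<not> n dvd q"
  define i r where "i = q div n" and "r = q mod n"
  have q: "q = i * n + r" and r: "0 < r" "r < n"
    using \<open>\<not> n dvd q\<close> n_pos by (auto simp: i_def r_def mod_greater_zero_iff_not_dvd)
  have "Suc i * n < length w * n"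
    using assms(4) q r by (simp add: length_concat_blocks)
  then have i: "Suc i < length w"
    by (simp only: mult_n_less_iff)
  let ?x = "us ! i" and ?y = "us ! Suc i"
  have u: "u = drop r ?x @ take r ?y"
    using take_drop_concat_uniform_straddle[OF length_block] i r assms(5) q length_blocks_eq by simp
  have x: "w ! i < 3" "?x \<in> B (w ! i)" and y: "w ! Suc i < 3" "?y \<in> B (w ! Suc i)"
    using blocks_of_nth[OF w_blocks] i by auto
  note straddle = not_square_free_straddle[OF u r(1)]
  have "w ! i \<noteq> w ! Suc i"
    using square_free_nth_Suc[OF assms(1) i] .
  then consider "c \<noteq> w ! i" | "c \<noteq> w ! Suc i"
    by blast
  then show False
  proof cases
    case 1
    then have "square_free (?x @ u)"
      using square_free_B_pair x assms(2,3) by auto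
    then show False
      using straddle(1) r length_B[OF x] length_B[OF y] by simp
  next
    case 2
    then have "square_free (u @ ?y)"
      using square_free_B_pair y assms(2,3) by auto
    then show False
      using straddle(2) r length_B[OF x] length_B[OF y] by simp
  qed
qed

lemma no_short_square:
  assumes "square_free w" "p + 2 * l \<le> (p div n + 3) * n"
  shows "\<not> square_at (concat us) p l"
proof
  assume sq: "square_at (concat us) p l"
  define j where "j = p div n"
  have "j * n \<le> p"
    by (simp add: j_def)
  have window: "take (3 * n) (drop (j * n) (concat us)) = concat (take 3 (drop j us))"
    using length_block
    by (simp add: drop_concat_uniform take_concat_uniform[of "drop j us"] in_set_dropD)
  have "square_at (concat (take 3 (drop j us))) (p - j * n) l"
    using square_at_infix[OF sq \<open>j * n \<le> p\<close>, of "3 * n"] assms(2) window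
    by (simp add: j_def algebra_simps)
  moreover have "square_free (concat (take 3 (drop j us)))"
    using assms(1) w_blocks
    by (intro square_free_concat_short[of "take 3 (drop j w)"]) (auto simp: square_free_take square_free_drop)
  ultimately show False
    by (simp add: square_free_iff_no_square_at)
qed

lemma long_square_period:
  assumes "square_free w" and sq: "square_at (concat us) p l" and "(p div n + 3) * n < p + 2 * l"
  shows "n dvd l"
proof -
  have fit: "p + 2 * l \<le> length w * n"
    using sq by (simp add: square_at_def length_concat_blocks)
  have i_bound: "i < length w" if "i * n + n \<le> p + 2 * l" for i
  proof -
    have "Suc i * n \<le> length w * n"
      using that fit by simp
    then show ?thesis
      by (simp only: mult_n_le_iff Suc_le_eq)
  qed
  have aligned: "n dvd q" if "take n (drop q (concat us)) = us ! i" "q + n \<le> p + 2 * l" "i < length w" for q i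
    using block_occurrence_aligned[OF assms(1), of "w ! i" "us ! i" q] blocks_of_nth[OF w_blocks] that fit
    by (simp add: length_concat_blocks)
  from assms(3) show ?thesis
  proof (rule block_within_long_square)
    fix i assume i: "p \<le> i * n" "i * n + n \<le> p + l"
    then have "i < length w"
      using i_bound by simp
    have "take n (drop (i * n + l) (concat us)) = take n (drop (i * n) (concat us))"
      using square_at_shift[OF sq i] by simp
    also have "\<dots> = us ! i"
      using take_drop_concat_blocks \<open>i < length w\<close> by simp
    finally have "n dvd i * n + l"
      by (rule aligned) (use i \<open>i < length w\<close> in simp_all)
    then show ?thesis
      by (simp add: dvd_add_right_iff)
  next
    fix i assume i: "p + l \<le> i * n" "i * n + n \<le> p + 2 * l"
    then have "i < length w"
      using i_bound by simp
    have "take n (drop (i * n - l) (concat us)) = take n (drop (i * n) (concat us))"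
      using square_at_shift[OF sq, of "i * n - l" n] i by simp
    also have "\<dots> = us ! i"
      using take_drop_concat_blocks \<open>i < length w\<close> by simp
    finally have "n dvd i * n - l"
      by (rule aligned) (use i \<open>i < length w\<close> in simp_all)
    then show ?thesis
      using i(1) by (metis dvd_diff_nat dvd_triv_right diff_diff_cancel le_add2 le_trans)
  qed
qed

lemma block_repeat:
  assumes sq: "square_at (concat us) p (t * n)" and "p \<le> i * n" "i * n + n \<le> p + t * n"
  shows "us ! (i + t) = us ! i" and "w ! (i + t) = w ! i"
proof -
  have "Suc (i + t) * n \<le> length w * n"
    using sq assms(3) by (simp add: square_at_def length_concat_blocks algebra_simps)
  then have it: "i + t < length w"
    by (simp only: mult_n_le_iff Suc_le_eq)
  then have i: "i < length w"
    by simp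
  have "us ! (i + t) = take n (drop (i * n + t * n) (concat us))"
    using take_drop_concat_blocks[OF it] by (simp add: algebra_simps)
  also have "\<dots> = take n (drop (i * n) (concat us))"
    using square_at_shift[OF sq assms(2,3)] by simp
  also have "\<dots> = us ! i"
    using take_drop_concat_blocks[OF i] .
  finally show "us ! (i + t) = us ! i" .
  then show "w ! (i + t) = w ! i"
    using blocks_of_nth[OF w_blocks it] blocks_of_nth[OF w_blocks i]
    by (intro B_disjoint[of _ _ "us ! i"]) auto
qed

context
  fixes j r t :: nat
  assumes sq: "square_at (concat us) (j * n + r) (t * n)" and r_less: "r < n"
begin

lemma long_square_fits: "j + 2 * t \<le> length w" "0 < r \<Longrightarrow> j + 2 * t < length w"
proof -
  have fit: "(j + 2 * t) * n + r \<le> length w * n"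
    using sq by (simp add: square_at_def length_concat_blocks algebra_simps)
  then have "(j + 2 * t) * n \<le> length w * n"
    by linarith
  then show "j + 2 * t \<le> length w"
    by (simp only: mult_n_le_iff)
  show "j + 2 * t < length w" if "0 < r"
  proof -
    have "(j + 2 * t) * n < length w * n"
      using fit that by linarith
    then show ?thesis
      by (simp only: mult_n_less_iff)
  qed
qed

lemma long_square_letters_repeat: "0 < i \<Longrightarrow> i < t \<Longrightarrow> w ! (j + i + t) = w ! (j + i)"
proof -
  assume "0 < i" "i < t"
  then have "n \<le> i * n" "i * n + n \<le> t * n"
    using mult_le_mono1[of "Suc i" t n] by simp_all
  then have "j * n + r \<le> (j + i) * n" "(j + i) * n + n \<le> j * n + r + t * n"
    unfolding add_mult_distrib using r_less by linarith+
  then show ?thesis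
    using block_repeat(2)[OF sq] by simp
qed

lemma long_square_lifts: "w ! (j + t) = w ! j \<Longrightarrow> square_at w j t"
  unfolding square_at_iff_nth
proof (intro conjI allI impI)
  show "0 < t"
    using sq by (simp add: square_at_def)
  show "j + 2 * t \<le> length w"
    by (rule long_square_fits(1))
  fix i assume "w ! (j + t) = w ! j" "i < t"
  then show "w ! (j + i) = w ! (j + t + i)"
    using long_square_letters_repeat[of i] by (cases "i = 0") (simp_all add: algebra_simps)
qed

lemma long_square_lifts_Suc:
  assumes "0 < r" "w ! (j + t) = w ! (j + 2 * t)"
  shows "square_at w (Suc j) t"
  unfolding square_at_iff_nth
proof (intro conjI allI impI)
  show "0 < t"
    using sq by (simp add: square_at_def)
  show "Suc j + 2 * t \<le> length w"
    using long_square_fits(2) assms(1) by simp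
  fix i assume "i < t"
  show "w ! (Suc j + i) = w ! (Suc j + t + i)"
  proof (cases "Suc i < t")
    case True
    then show ?thesis
      using long_square_letters_repeat[of "Suc i"] by (simp add: algebra_simps)
  next
    case False
    then have "Suc j + i = j + t" "Suc j + t + i = j + 2 * t"
      using \<open>i < t\<close> by simp_all
    then show ?thesis
      using assms(2) by (simp only:)
  qed
qed

lemma long_square_three_blocks:
  assumes "0 < r"
  shows "\<not> square_free (us ! j @ us ! (j + t) @ us ! (j + 2 * t))"
proof (rule shifted_blocks_not_square_free)
  have "0 < t"
    using sq by (simp add: square_at_def)
  then have "n \<le> t * n"
    by simp
  have block: "us ! i = take n (drop (i * n) (concat us))" if "i \<le> j + 2 * t" for i
    using take_drop_concat_blocks that long_square_fits(2)[OF assms] by simp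
  have "drop r (us ! j) = take (n - r) (drop (j * n + r) (concat us))"
    using block[of j] by (simp add: drop_take add.commute)
  also have "\<dots> = take (n - r) (drop (j * n + r + t * n) (concat us))"
    by (rule square_at_shift[OF sq]) (use \<open>n \<le> t * n\<close> in linarith)+
  also have "\<dots> = drop r (us ! (j + t))"
    using block[of "j + t"] by (simp add: drop_take algebra_simps)
  finally show "drop r (us ! j) = drop r (us ! (j + t))" .
  have "take r (us ! (j + t)) = take r (drop ((j + t) * n) (concat us))"
    using block[of "j + t"] r_less by simp
  also have "\<dots> = take r (drop ((j + t) * n + t * n) (concat us))"
  proof (rule square_at_shift[OF sq])
    show "j * n + r \<le> (j + t) * n" "(j + t) * n + r \<le> j * n + r + t * n"
      unfolding add_mult_distrib using \<open>n \<le> t * n\<close> r_less by linarith+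
  qed
  also have "(j + t) * n + t * n = (j + 2 * t) * n"
    by (simp add: algebra_simps)
  also have "take r (drop ((j + 2 * t) * n) (concat us)) = take r (us ! (j + 2 * t))"
    using block[of "j + 2 * t"] r_less by simp
  finally show "take r (us ! (j + t)) = take r (us ! (j + 2 * t))" .
  have x: "w ! j < 3" "us ! j \<in> B (w ! j)" and y: "w ! (j + t) < 3" "us ! (j + t) \<in> B (w ! (j + t))"
    using blocks_of_nth[OF w_blocks] long_square_fits(2)[OF assms] by auto
  then show "length (us ! j) = length (us ! (j + t))" "r \<le> length (us ! (j + t))" "us ! (j + t) \<noteq> []"
    using length_B[OF x] length_B[OF y] r_less n_pos by auto
qed

end

end

theorem square_free_concat:
  assumes w: "square_free w" and w_blocks: "blocks_of w us"
  shows "square_free (concat us)"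
  unfolding square_free_iff_no_square_at
proof (intro allI notI)
  fix p l
  assume sq: "square_at (concat us) p l"
  then have "n dvd l"
    using long_square_period[OF w_blocks w sq] no_short_square[OF w_blocks w] by fastforce
  then obtain t where l: "l = t * n"
    by (metis dvdE mult.commute)
  define j r where "j = p div n" and "r = p mod n"
  have "p = j * n + r" and r: "r < n"
    using n_pos by (simp_all add: j_def r_def)
  then have sq: "square_at (concat us) (j * n + r) (t * n)"
    using sq l by simp
  note lifts = long_square_lifts[OF w_blocks sq r] long_square_lifts_Suc[OF w_blocks sq r]
  show False
  proof (cases "r = 0")
    case True
    have "0 < t"
      using sq by (simp add: square_at_def)
    then have "w ! (j + t) = w ! j"
      using block_repeat(2)[OF w_blocks sq, of j] True by simp
    then show False
      using lifts(1) w by (simp add: square_free_iff_no_square_at)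
  next
    case False
    then have "w ! j \<noteq> w ! (j + t)" "w ! (j + t) \<noteq> w ! (j + 2 * t)"
      using lifts w by (auto simp: square_free_iff_no_square_at)
    moreover have "w ! i < 3 \<and> us ! i \<in> B (w ! i)" if "i \<le> j + 2 * t" for i
      using blocks_of_nth[OF w_blocks] long_square_fits(2)[OF w_blocks sq r] False that by simp
    ultimately have "square_free (us ! j @ us ! (j + t) @ us ! (j + 2 * t))"
      by (intro square_free_B_triple[of "w ! j" "w ! (j + t)" "w ! (j + 2 * t)"]) auto
    then show False
      using long_square_three_blocks[OF w_blocks sq r] False by simp
  qed
qed

lemma kmin_le: "a < 3 \<Longrightarrow> kmin \<le> k a"
proof -
  assume "a < 3"
  then have "a = 0 \<or> a = 1 \<or> a = 2"
    by auto
  then show ?thesis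
    by auto
qed

lemma one_le_kmin: "1 \<le> kmin"
  using brinkhuis_triple_k_bounds(1)[OF triple] by simp

lemma block_coding_exists:
  obtains G where "\<And>a j. a < 3 \<Longrightarrow> j < kmin \<Longrightarrow> G (a, j) \<in> B a"
    and "inj_on G ({..<3} \<times> {..<kmin})"
proof -
  have "\<exists>f. f ` {..<kmin} \<subseteq> B a \<and> inj_on f {..<kmin}" if "a < 3" for a
  proof (rule card_le_inj)
    show "card {..<kmin} \<le> card (B a)"
      using card_B[OF that] kmin_le[OF that] by simp
    show "finite (B a)"
      using B_subset[OF that] finite_sqfree_words by (rule finite_subset)
  qed simp
  then obtain F where F: "\<And>a. a < 3 \<Longrightarrow> F a ` {..<kmin} \<subseteq> B a \<and> inj_on (F a) {..<kmin}"
    by metis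
  define G where "G = (\<lambda>(a, j). F a j)"
  have G_in: "G (a, j) \<in> B a" if "a < 3" "j < kmin" for a j
    using F[OF that(1)] that(2) by (auto simp: G_def)
  have inj: "inj_on G ({..<3} \<times> {..<kmin})"
  proof (rule inj_onI)
    fix x y assume x: "x \<in> {..<3} \<times> {..<kmin}" and y: "y \<in> {..<3} \<times> {..<kmin}" and "G x = G y"
    obtain a j b j' where ab: "x = (a, j)" "y = (b, j')"
      by force
    with x y have "a < 3" "j < kmin" "b < 3" "j' < kmin"
      by auto
    moreover have "F a j = F b j'"
      using \<open>G x = G y\<close> ab by (simp add: G_def)
    moreover from calculation have "a = b"
      using G_in[of a j] G_in[of b j'] B_disjoint by (simp add: G_def)
    ultimately show "x = y"
      using F[of a] ab by (auto simp: inj_on_def)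
  qed
  show ?thesis
    using G_in inj by (rule that)
qed

lemma a_count_mult_le: "a_count m * kmin ^ m \<le> a_count (m * n)"
proof -
  obtain G where G_in: "\<And>a j. a < 3 \<Longrightarrow> j < kmin \<Longrightarrow> G (a, j) \<in> B a"
    and inj_G: "inj_on G ({..<3} \<times> {..<kmin})"
    using block_coding_exists by blast
  define J where "J = {js. set js \<subseteq> {..<kmin} \<and> length js = m}"
  define \<Phi> where "\<Phi> = (\<lambda>(w, js). concat (map G (zip w js)))"
  have blocks: "blocks_of w (map G (zip w js))" if "w \<in> sqfree_words m" "js \<in> J" for w js
  proof -
    have len: "length js = length w" and w: "set w \<subseteq> {0, 1, 2}" and js: "set js \<subseteq> {..<kmin}"
      using that by (auto simp: sqfree_words_def J_def)
    have "w ! i < 3" "js ! i < kmin" if "i < length w" for i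
      using subsetD[OF w nth_mem[OF that]] subsetD[OF js nth_mem[of i js]] that len by auto
    then show ?thesis
      using G_in len by (simp add: list_all2_conv_all_nth)
  qed
  have "\<Phi> ` (sqfree_words m \<times> J) \<subseteq> sqfree_words (m * n)"
  proof clarify
    fix w js assume w: "w \<in> sqfree_words m" and js: "js \<in> J"
    note bl = blocks[OF w js]
    have "square_free (concat (map G (zip w js)))"
      using square_free_concat[OF _ bl] w by (simp add: sqfree_words_def)
    moreover have "length (concat (map G (zip w js))) = m * n"
      using length_concat_blocks[OF bl] w by (simp add: sqfree_words_def)
    ultimately show "\<Phi> (w, js) \<in> sqfree_words (m * n)"
      using letters_concat_blocks[OF bl] by (simp add: \<Phi>_def sqfree_words_def)
  qed
  moreover have "inj_on \<Phi> (sqfree_words m \<times> J)"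
  proof (rule inj_onI, clarify)
    fix w js w' js'
    assume "w \<in> sqfree_words m" "w' \<in> sqfree_words m" "js \<in> J" "js' \<in> J" "\<Phi> (w, js) = \<Phi> (w', js')"
    then show "w = w' \<and> js = js'"
      using G_in length_B
      by (intro concat_map_zip_inject[OF inj_G, of n]) (auto simp: sqfree_words_def J_def \<Phi>_def)
  qed
  ultimately have "card (sqfree_words m \<times> J) \<le> a_count (m * n)"
    unfolding a_count_def by (intro card_inj_on_le finite_sqfree_words)
  then show ?thesis
    by (simp add: J_def a_count_def card_cartesian_product card_lists_length_eq)
qed

end

section \<open>Leech's morphism\<close>

fun square_prefix_after :: "'a list \<Rightarrow> 'a list \<Rightarrow> bool" where
  "square_prefix_after y [] = False"
| "square_prefix_after y (x # xs) \<longleftrightarrow> prefix (y @ [x]) xs \<or> square_prefix_after (y @ [x]) xs"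

lemma square_prefix_after_iff:
  "square_prefix_after y v \<longleftrightarrow> (\<exists>u z. u \<noteq> [] \<and> v = u @ y @ u @ z)"
proof (induction v arbitrary: y)
  case (Cons x xs)
  have "(\<exists>u z. u \<noteq> [] \<and> x # xs = u @ y @ u @ z) \<longleftrightarrow>
        (\<exists>z. xs = (y @ [x]) @ z) \<or> (\<exists>u z. u \<noteq> [] \<and> xs = u @ (y @ [x]) @ u @ z)"
  proof
    assume "\<exists>u z. u \<noteq> [] \<and> x # xs = u @ y @ u @ z"
    then obtain u z where "u \<noteq> []" "x # xs = u @ y @ u @ z" by blast
    then obtain u' where "u = x # u'" "xs = u' @ (y @ [x]) @ u' @ z"
      by (cases u) auto
    then show "(\<exists>z. xs = (y @ [x]) @ z) \<or> (\<exists>u z. u \<noteq> [] \<and> xs = u @ (y @ [x]) @ u @ z)"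
      by (cases "u' = []") auto
  next
    assume "(\<exists>z. xs = (y @ [x]) @ z) \<or> (\<exists>u z. u \<noteq> [] \<and> xs = u @ (y @ [x]) @ u @ z)"
    then show "\<exists>u z. u \<noteq> [] \<and> x # xs = u @ y @ u @ z"
    proof
      assume "\<exists>z. xs = (y @ [x]) @ z"
      then obtain z where "xs = (y @ [x]) @ z" by blast
      then show ?thesis by (intro exI[of _ "[x]"] exI[of _ z]) auto
    next
      assume "\<exists>u z. u \<noteq> [] \<and> xs = u @ (y @ [x]) @ u @ z"
      then obtain u z where "xs = u @ (y @ [x]) @ u @ z" by blast
      then show ?thesis by (intro exI[of _ "x # u"] exI[of _ z]) auto
    qed
  qed
  then show ?case
    using Cons.IH by (simp add: prefix_def)
qed simp

lemma square_free_Cons: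
  "square_free (x # xs) \<longleftrightarrow> \<not> square_prefix_after [] (x # xs) \<and> square_free xs"
proof
  assume sf: "square_free (x # xs)"
  then have "\<not> (\<exists>u z. u \<noteq> [] \<and> x # xs = u @ [] @ u @ z)"
    unfolding square_free_def by (metis append_Nil)
  then show "\<not> square_prefix_after [] (x # xs) \<and> square_free xs"
    using square_free_drop[OF sf, of 1]
    by (simp add: square_prefix_after_iff del: square_prefix_after.simps)
next
  assume "\<not> square_prefix_after [] (x # xs) \<and> square_free xs"
  then show "square_free (x # xs)"
    unfolding square_free_def
    by (auto simp: square_prefix_after_iff Cons_eq_append_conv simp del: square_prefix_after.simps)
qed

definition leech :: "nat \<Rightarrow> nat list" where
  "leech i = map (\<lambda>c. (c + i) mod 3) [0,1,2,1,0,2,1,2,0,1,2,1,0]"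

lemma leech_square_free:
  assumes "a < 3" "b < 3" "c < 3" "a \<noteq> b" "b \<noteq> c"
  shows "square_free (leech a @ leech b @ leech c)"
proof -
  have "a = 0 \<or> a = 1 \<or> a = 2" "b = 0 \<or> b = 1 \<or> b = 2" "c = 0 \<or> c = 1 \<or> c = 2"
    using assms(1-3) by auto
  then show ?thesis
    using assms(4,5) by (elim disjE) (simp_all add: leech_def square_free_Cons square_free_Nil)
qed

lemma leech_in_sqfree_words: "i < 3 \<Longrightarrow> leech i \<in> sqfree_words 13"
proof -
  assume "i < 3"
  moreover have "i \<noteq> (i + 1) mod 3"
    by presburger
  ultimately have "square_free ([] @ leech i @ (leech ((i + 1) mod 3) @ leech i))"
    using leech_square_free[of i "(i + 1) mod 3" i] by simp
  then have "square_free (leech i)"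
    by (rule square_free_infix)
  then show ?thesis
    by (auto simp: sqfree_words_def leech_def)
qed

lemma brinkhuis_leech: "brinkhuis 13 (\<lambda>_. 1) (\<lambda>i. {leech i})"
proof
  have "square_free (leech a @ leech b @ leech c)" if "[a, b, c] \<in> sqfree_words 3" for a b c
  proof (rule leech_square_free)
    show "a < 3" "b < 3" "c < 3"
      using that by (auto simp: sqfree_words_def)
    show "a \<noteq> b" "b \<noteq> c"
      using that square_free_nth_Suc[of "[a, b, c]" 0] square_free_nth_Suc[of "[a, b, c]" 1]
      by (auto simp: sqfree_words_def)
  qed
  then show "brinkhuis_triple 13 (\<lambda>_. 1) (\<lambda>i. {leech i})"
    unfolding brinkhuis_triple_def using leech_in_sqfree_words by auto
qed simp

lemma sqfree_words_nonempty: "sqfree_words N \<noteq> {}"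
proof -
  interpret leech: brinkhuis 13 "\<lambda>_. 1" "\<lambda>i. {leech i}"
    by (rule brinkhuis_leech)
  have "0 < a_count (13 ^ e)" for e
  proof (induction e)
    case 0
    have "[0] \<in> sqfree_words 1"
      by (simp add: sqfree_words_def square_free_Cons square_free_Nil)
    then show ?case
      using finite_sqfree_words by (auto simp: a_count_def card_gt_0_iff)
  next
    case (Suc e)
    then show ?case
      using leech.a_count_mult_le[of "13 ^ e"] by (simp add: mult.commute)
  qed
  then obtain w where w: "w \<in> sqfree_words (13 ^ N)"
    using finite_sqfree_words by (force simp: a_count_def card_gt_0_iff)
  have "N < 13 ^ N"
    by (rule less_le_trans[OF less_exp power_mono]) simp_all
  then have "take N w \<in> sqfree_words N"
    using w by (auto simp: sqfree_words_def square_free_take dest: in_set_takeD)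
  then show ?thesis
    by blast
qed

lemma a_count_pos: "0 < a_count N"
  using sqfree_words_nonempty finite_sqfree_words by (simp add: a_count_def card_gt_0_iff)

section \<open>The growth rate\<close>

lemma subadditive_mult_le:
  fixes b :: "nat \<Rightarrow> real"
  assumes "\<And>p q. b (p + q) \<le> b p + b q"
  shows "b (q * M + r) \<le> real q * b M + b r"
proof (induction q)
  case (Suc q)
  have "b (Suc q * M + r) = b (M + (q * M + r))"
    by (simp add: algebra_simps)
  also have "\<dots> \<le> b M + b (q * M + r)"
    by (rule assms)
  also have "\<dots> \<le> b M + (real q * b M + b r)"
    using Suc by simp
  finally show ?case
    by (simp add: algebra_simps)
qed simp

lemma subadditive_quotient_le:
  fixes b :: "nat \<Rightarrow> real"
  assumes sub: "\<And>p q. b (p + q) \<le> b p + b q" and nonneg: "\<And>N. 0 \<le> b N"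
    and "0 < M" "0 < N"
  shows "b N / real N \<le> b M / real M + (\<Sum>r<M. b r) / real N"
proof -
  define q r where "q = N div M" and "r = N mod M"
  have N: "N = q * M + r" and "r < M"
    using \<open>0 < M\<close> by (simp_all add: q_def r_def)
  have "real q * b M = (real q * real M) * (b M / real M)"
    using \<open>0 < M\<close> by simp
  also have "\<dots> \<le> real N * (b M / real M)"
  proof (rule mult_right_mono)
    have "q * M \<le> N"
      using N by simp
    then show "real q * real M \<le> real N"
      by (metis of_nat_le_iff of_nat_mult)
  qed (use nonneg[of M] in simp)
  finally have "real q * b M \<le> real N * (b M / real M)" .
  moreover have "b N \<le> real q * b M + b r"
    using subadditive_mult_le[of b, OF sub, of q M r] N by simp
  moreover have "b r \<le> (\<Sum>r<M. b r)"
    using \<open>r < M\<close> nonneg by (intro member_le_sum) auto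
  ultimately have "b N \<le> real N * (b M / real M) + (\<Sum>r<M. b r)"
    by linarith
  then show ?thesis
    using \<open>0 < N\<close> by (simp add: field_simps)
qed

lemma fekete_subadditive:
  fixes b :: "nat \<Rightarrow> real"
  assumes sub: "\<And>p q. b (p + q) \<le> b p + b q" and nonneg: "\<And>N. 0 \<le> b N"
  shows "(\<lambda>N. b N / real N) \<longlonglongrightarrow> (INF N\<in>{1..}. b N / real N)"
proof -
  define l where "l = (INF N\<in>{1..}. b N / real N)"
  have bdd: "bdd_below ((\<lambda>N. b N / real N) ` {1..})"
    using nonneg by (intro bdd_belowI[of _ 0]) auto
  have l_le: "l \<le> b N / real N" if "1 \<le> N" for N
    unfolding l_def using bdd that by (intro cINF_lower) auto
  have "(\<lambda>N. b N / real N) \<longlonglongrightarrow> l"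
  proof (rule order_tendstoI)
    fix a assume "a < l"
    then show "\<forall>\<^sub>F N in sequentially. a < b N / real N"
      using l_le by (intro eventually_sequentiallyI[of 1]) (auto intro: less_le_trans)
  next
    fix a assume "l < a"
    define e where "e = (a - l) / 2"
    have "0 < e"
      using \<open>l < a\<close> by (simp add: e_def)
    then obtain M where "1 \<le> M" and M: "b M / real M < l + e"
      using cINF_less_iff[of "{1..}" "\<lambda>N. b N / real N" "l + e"] bdd by (auto simp: l_def)
    define C where "C = (\<Sum>r<M. b r)"
    obtain N0 :: nat where N0: "C / e < real N0"
      using reals_Archimedean2 by blast
    show "\<forall>\<^sub>F N in sequentially. b N / real N < a"
    proof (rule eventually_sequentiallyI[of "max N0 1"])
      fix N assume N: "max N0 1 \<le> N"
      have "C < e * real N0"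
        using N0 \<open>0 < e\<close> by (simp add: pos_divide_less_eq mult.commute)
      also have "\<dots> \<le> e * real N"
        using N \<open>0 < e\<close> by simp
      finally have "C / real N < e"
        using N by (simp add: pos_divide_less_eq)
      moreover have "b N / real N \<le> b M / real M + C / real N"
        unfolding C_def using N \<open>1 \<le> M\<close> by (intro subadditive_quotient_le[of b, OF sub nonneg]) auto
      moreover have "a = l + 2 * e"
        by (simp add: e_def field_simps)
      ultimately show "b N / real N < a"
        using M by linarith
    qed
  qed
  then show ?thesis
    by (simp add: l_def)
qed

lemma
  shows growth_s_tendsto: "(\<lambda>N. real (a_count N) powr (1 / real N)) \<longlonglongrightarrow> growth_s"
    and one_le_growth_s: "1 \<le> growth_s"
proof -
  define b where "b N = ln (real (a_count N))" for N
  have pos: "0 < real (a_count N)" for N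
    using a_count_pos by simp
  have nonneg: "0 \<le> b N" for N
    using a_count_pos[of N] by (simp add: b_def)
  have sub: "b (p + q) \<le> b p + b q" for p q
  proof -
    have "real (a_count (p + q)) \<le> real (a_count p) * real (a_count q)"
      using a_count_add_le[of p q] by (metis of_nat_le_iff of_nat_mult)
    then have "ln (real (a_count (p + q))) \<le> ln (real (a_count p) * real (a_count q))"
      using pos by (subst ln_le_cancel_iff) auto
    then show ?thesis
      using pos by (simp add: b_def ln_mult)
  qed
  define l where "l = (INF N\<in>{1..}. b N / real N)"
  have "0 \<le> l"
    unfolding l_def using nonneg by (intro cINF_greatest) auto
  have "(\<lambda>N. b N / real N) \<longlonglongrightarrow> l"
    unfolding l_def by (rule fekete_subadditive[of b, OF sub nonneg])
  then have "(\<lambda>N. exp (b N / real N)) \<longlonglongrightarrow> exp l"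
    by (rule tendsto_exp)
  moreover have "real (a_count N) powr (1 / real N) = exp (b N / real N)" for N
    using pos[of N] by (simp add: powr_def b_def)
  ultimately have lim: "(\<lambda>N. real (a_count N) powr (1 / real N)) \<longlonglongrightarrow> exp l"
    by presburger
  then have "growth_s = exp l"
    unfolding growth_s_def by (rule limI)
  moreover have "1 \<le> exp l"
    using \<open>0 \<le> l\<close> by simp
  ultimately show "(\<lambda>N. real (a_count N) powr (1 / real N)) \<longlonglongrightarrow> growth_s" "1 \<le> growth_s"
    using lim by simp_all
qed

context brinkhuis
begin

lemma a_count_root_mult_le:
  assumes "0 < m"
  shows "real (a_count m) powr (1 / real m) * kmin \<le> (real (a_count (m * n)) powr (1 / real (m * n))) ^ n"
proof -
  have "real (a_count m) * real kmin ^ m \<le> real (a_count (m * n))"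
    using a_count_mult_le[of m] by (metis of_nat_le_iff of_nat_mult of_nat_power)
  then have "(real (a_count m) * real kmin ^ m) powr (1 / real m) \<le> real (a_count (m * n)) powr (1 / real m)"
    by (intro powr_mono2) auto
  moreover have "(real (a_count m) * real kmin ^ m) powr (1 / real m) = real (a_count m) powr (1 / real m) * kmin"
    using one_le_kmin assms by (simp add: powr_mult powr_realpow[symmetric] powr_powr)
  moreover have "real (a_count (m * n)) powr (1 / real m) = (real (a_count (m * n)) powr (1 / real (m * n))) ^ n"
    using a_count_pos[of "m * n"] assms n_pos by (simp add: powr_realpow[symmetric] powr_powr)
  ultimately show ?thesis
    by simp
qed

lemma growth_s_mult_kmin_le: "growth_s * kmin \<le> growth_s ^ n"
proof (rule tendsto_le[OF trivial_limit_sequentially])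
  show "(\<lambda>m. real (a_count m) powr (1 / real m) * kmin) \<longlonglongrightarrow> growth_s * kmin"
    using growth_s_tendsto by (rule tendsto_mult_right)
  have "strict_mono (\<lambda>m. m * n)"
    using n_pos by (intro strict_monoI) simp
  then have "(\<lambda>m. real (a_count (m * n)) powr (1 / real (m * n))) \<longlonglongrightarrow> growth_s"
    using LIMSEQ_subseq_LIMSEQ[OF growth_s_tendsto] by (simp only: o_def)
  then show "(\<lambda>m. (real (a_count (m * n)) powr (1 / real (m * n))) ^ n) \<longlonglongrightarrow> growth_s ^ n"
    by (rule tendsto_power)
  show "\<forall>\<^sub>F m in sequentially.
      real (a_count m) powr (1 / real m) * kmin \<le> (real (a_count (m * n)) powr (1 / real (m * n))) ^ n"
    using a_count_root_mult_le by (intro eventually_sequentiallyI[of 1]) simp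
qed

lemma growth_s_ge_root:
  assumes "2 \<le> n"
  shows "real kmin powr (1 / (real n - 1)) \<le> growth_s"
proof -
  have "growth_s * kmin \<le> growth_s * growth_s ^ (n - 1)"
    using growth_s_mult_kmin_le assms by (simp add: power_eq_if)
  then have "real kmin \<le> growth_s ^ (n - 1)"
    using one_le_growth_s by simp
  then have "real kmin powr (1 / real (n - 1)) \<le> (growth_s ^ (n - 1)) powr (1 / real (n - 1))"
    using one_le_kmin by (intro powr_mono2) auto
  also have "\<dots> = growth_s"
    using one_le_growth_s assms by (simp add: powr_realpow[symmetric] powr_powr)
  finally show ?thesis
    using assms by simp
qed

end

lemma brinkhuis_triple_degenerate_root:
  assumes "brinkhuis_triple n k B" "n < 2"
  shows "real (min (k 0) (min (k 1) (k 2))) powr (1 / (real n - 1)) = 1"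
proof -
  note k_bounds = brinkhuis_triple_k_bounds[OF assms(1)]
  have "min (k 0) (min (k 1) (k 2)) \<noteq> 0"
    using k_bounds(1)[of 0] k_bounds(1)[of 1] k_bounds(1)[of 2] by simp
  moreover have "min (k 0) (min (k 1) (k 2)) = 1" if "n = 0"
  proof -
    have "a_count 0 = 1"
      by (simp add: a_count_def sqfree_words_0)
    then show ?thesis
      using k_bounds[of 0] k_bounds[of 1] k_bounds[of 2] that by simp
  qed
  moreover have "n = 0 \<or> n = 1"
    using assms(2) by auto
  ultimately show ?thesis
    by auto
qed

theorem lemma2:
  fixes n :: nat and k :: "nat \<Rightarrow> nat" and B :: "nat \<Rightarrow> nat list set"
  assumes "brinkhuis_triple n k B"
  shows "growth_s \<ge> real (min (k 0) (min (k 1) (k 2))) powr (1 / (real n - 1))"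
proof (cases "2 \<le> n")
  case True
  interpret brinkhuis n k B
    using assms True by unfold_locales simp_all
  show ?thesis
    using growth_s_ge_root True by simp
next
  case False
  then show ?thesis
    using brinkhuis_triple_degenerate_root[OF assms] one_le_growth_s by simp
qed

end
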